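(* Let $(\mathcal{A},\mathcal{E})$ be a finite, essentially small exact category. Then $\mu_\mathcal{E}:(\mathrm{ind}\mathcal{A},\subset_\mathcal{E})\to(\mathfrak{S}(\mathbb{N}),\lll)$ is a Gabriel–Roiter measure, i.e.: (GR1) $\mu_\mathcal{E}$ is order-preserving; (GR2) $\mu_\mathcal{E}(X)=\mu_\mathcal{E}(Y)$ implies $l_\mathcal{E}(X)=l_\mathcal{E}(Y)$ for all $X,Y\in\mathrm{ind}\mathcal{A}$; (GR3) if $X,Y\in\mathrm{ind}\mathcal{A}$ satisfy $l_\mathcal{E}(X)\ge l_\mathcal{E}(Y)$ and $\mu_\mathcal{E}(X')\lll\mu_\mathcal{E}(Y)$ with $\mu_\mathcal{E}(X')\ne\mu_\mathcal{E}(Y)$ for every indecomposable $X'\subsetneq_\mathcal{E}X$, then $\mu_\mathcal{E}(X)\lll\mu_\mathcal{E}(Y)$.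
   Context: $(\mathcal{A},\mathcal{E})$ is a Quillen exact category; admissible monics are morphisms $i$ with $(i,d)\in\mathcal{E}$ for some $d$. $X\subset_\mathcal{E}Y$ means there is an admissible monic $X\to Y$; $X\subsetneq_\mathcal{E}Y$ means there is one that is not an isomorphism. The $\mathcal{E}$-length $l_\mathcal{E}(X)$ is the supremum of all $n$ such that there is a chain $0=X_0\to\cdots\to X_n=X$ of admissible monics none of which is an isomorphism; $(\mathcal{A},\mathcal{E})$ is finite if $l_\mathcal{E}(X)<\infty$ for all $X$. $\mathrm{ind}\mathcal{A}$ is the set of isomorphism classes of indecomposable objects, partially ordered by $\subset_\mathcal{E}$. $\mathfrak{S}(\mathbb{N})$ is the set of finite nonempty sequences of natural numbers, totally ordered by: $x\lll y$ iff $x=y$, or $x$ is a proper prefix of $y$, or at the first index $i$ where $x_i\neq y_i$ (both defined) one has $x_i>y_i$. For indecomposable $X$, $\mu_\mathcal{E}(X)$ is the $\lll$-maximum of $(l_\mathcal{E}(X_1),\dots,l_\mathcal{E}(X_n))$ over all chains $X_1\subsetneq_\mathcal{E}\cdots\subsetneq_\mathcal{E}X_n=X$ ($n\ge1$) with all $X_i$ indecomposable. *)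

theory Defs
  imports Main "HOL-Library.Extended_Nat" "HOL-Library.Sublist"
begin

record ('o, 'm) addcat =
  cObj  :: "'o set"
  cArr  :: "'m set"
  cDom  :: "'m \<Rightarrow> 'o"
  cCod  :: "'m \<Rightarrow> 'o"
  cComp :: "'m \<Rightarrow> 'm \<Rightarrow> 'm"   (* cComp C g f = g o f *)
  cId   :: "'o \<Rightarrow> 'm"
  cAdd  :: "'m \<Rightarrow> 'm \<Rightarrow> 'm"
  cZero :: "'o \<Rightarrow> 'o \<Rightarrow> 'm"
  cNeg  :: "'m \<Rightarrow> 'm"

definition hom :: "('o,'m) addcat \<Rightarrow> 'o \<Rightarrow> 'o \<Rightarrow> 'm set" where
  "hom C X Y = {f \<in> cArr C. cDom C f = X \<and> cCod C f = Y}"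

definition is_category :: "('o,'m) addcat \<Rightarrow> bool" where
  "is_category C \<longleftrightarrow>
     (\<forall>f\<in>cArr C. cDom C f \<in> cObj C \<and> cCod C f \<in> cObj C) \<and>
     (\<forall>X\<in>cObj C. cId C X \<in> hom C X X) \<and>
     (\<forall>f\<in>cArr C. \<forall>g\<in>cArr C. cCod C f = cDom C g \<longrightarrow>
         cComp C g f \<in> hom C (cDom C f) (cCod C g)) \<and>
     (\<forall>f\<in>cArr C. cComp C (cId C (cCod C f)) f = f \<and> cComp C f (cId C (cDom C f)) = f) \<and>
     (\<forall>f\<in>cArr C. \<forall>g\<in>cArr C. \<forall>h\<in>cArr C. cCod C f = cDom C g \<and> cCod C g = cDom C h \<longrightarrow>
         cComp C h (cComp C g f) = cComp C (cComp C h g) f)"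

definition is_preadditive :: "('o,'m) addcat \<Rightarrow> bool" where
  "is_preadditive C \<longleftrightarrow> is_category C \<and>
     (\<forall>X\<in>cObj C. \<forall>Y\<in>cObj C.
        cZero C X Y \<in> hom C X Y \<and>
        (\<forall>f\<in>hom C X Y. \<forall>g\<in>hom C X Y. cAdd C f g \<in> hom C X Y) \<and>
        (\<forall>f\<in>hom C X Y. cNeg C f \<in> hom C X Y) \<and>
        (\<forall>f\<in>hom C X Y. \<forall>g\<in>hom C X Y. \<forall>h\<in>hom C X Y.
            cAdd C (cAdd C f g) h = cAdd C f (cAdd C g h)) \<and>
        (\<forall>f\<in>hom C X Y. \<forall>g\<in>hom C X Y. cAdd C f g = cAdd C g f) \<and>
        (\<forall>f\<in>hom C X Y. cAdd C f (cZero C X Y) = f) \<and>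
        (\<forall>f\<in>hom C X Y. cAdd C f (cNeg C f) = cZero C X Y)) \<and>
     (\<forall>X\<in>cObj C. \<forall>Y\<in>cObj C. \<forall>Z\<in>cObj C.
        (\<forall>f\<in>hom C X Y. \<forall>f'\<in>hom C X Y. \<forall>g\<in>hom C Y Z.
            cComp C g (cAdd C f f') = cAdd C (cComp C g f) (cComp C g f')) \<and>
        (\<forall>f\<in>hom C X Y. \<forall>g\<in>hom C Y Z. \<forall>g'\<in>hom C Y Z.
            cComp C (cAdd C g g') f = cAdd C (cComp C g f) (cComp C g' f)))"

definition is_zero_obj :: "('o,'m) addcat \<Rightarrow> 'o \<Rightarrow> bool" where
  "is_zero_obj C Z \<longleftrightarrow> Z \<in> cObj C \<and>
     (\<forall>X\<in>cObj C. (\<exists>!f. f \<in> hom C Z X) \<and> (\<exists>!f. f \<in> hom C X Z))"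

definition is_biproduct ::
  "('o,'m) addcat \<Rightarrow> 'o \<Rightarrow> 'o \<Rightarrow> 'o \<Rightarrow> 'm \<Rightarrow> 'm \<Rightarrow> 'm \<Rightarrow> 'm \<Rightarrow> bool" where
  "is_biproduct C A B P i1 i2 p1 p2 \<longleftrightarrow>
     i1 \<in> hom C A P \<and> i2 \<in> hom C B P \<and> p1 \<in> hom C P A \<and> p2 \<in> hom C P B \<and>
     cComp C p1 i1 = cId C A \<and> cComp C p2 i2 = cId C B \<and>
     cComp C p2 i1 = cZero C A B \<and> cComp C p1 i2 = cZero C B A \<and>
     cAdd C (cComp C i1 p1) (cComp C i2 p2) = cId C P"

definition is_additive :: "('o,'m) addcat \<Rightarrow> bool" where
  "is_additive C \<longleftrightarrow> is_preadditive C \<and>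
     (\<exists>Z. is_zero_obj C Z) \<and>
     (\<forall>A\<in>cObj C. \<forall>B\<in>cObj C. \<exists>P\<in>cObj C. \<exists>i1 i2 p1 p2. is_biproduct C A B P i1 i2 p1 p2)"

definition is_iso :: "('o,'m) addcat \<Rightarrow> 'm \<Rightarrow> bool" where
  "is_iso C f \<longleftrightarrow> f \<in> cArr C \<and>
     (\<exists>g\<in>hom C (cCod C f) (cDom C f).
        cComp C g f = cId C (cDom C f) \<and> cComp C f g = cId C (cCod C f))"

definition is_kernel :: "('o,'m) addcat \<Rightarrow> 'm \<Rightarrow> 'm \<Rightarrow> bool" where
  "is_kernel C i d \<longleftrightarrow> i \<in> cArr C \<and> d \<in> cArr C \<and> cCod C i = cDom C d \<and>
     cComp C d i = cZero C (cDom C i) (cCod C d) \<and>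
     (\<forall>T\<in>cObj C. \<forall>f\<in>hom C T (cDom C d). cComp C d f = cZero C T (cCod C d) \<longrightarrow>
        (\<exists>!g. g \<in> hom C T (cDom C i) \<and> cComp C i g = f))"

definition is_cokernel :: "('o,'m) addcat \<Rightarrow> 'm \<Rightarrow> 'm \<Rightarrow> bool" where
  "is_cokernel C d i \<longleftrightarrow> i \<in> cArr C \<and> d \<in> cArr C \<and> cCod C i = cDom C d \<and>
     cComp C d i = cZero C (cDom C i) (cCod C d) \<and>
     (\<forall>T\<in>cObj C. \<forall>f\<in>hom C (cCod C i) T. cComp C f i = cZero C (cDom C i) T \<longrightarrow>
        (\<exists>!g. g \<in> hom C (cCod C d) T \<and> cComp C g d = f))"

definition is_kc_pair :: "('o,'m) addcat \<Rightarrow> 'm \<Rightarrow> 'm \<Rightarrow> bool" where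
  "is_kc_pair C i d \<longleftrightarrow> is_kernel C i d \<and> is_cokernel C d i"

definition iso_pairs :: "('o,'m) addcat \<Rightarrow> 'm \<Rightarrow> 'm \<Rightarrow> 'm \<Rightarrow> 'm \<Rightarrow> bool" where
  "iso_pairs C i d i' d' \<longleftrightarrow>
     (\<exists>a b c. a \<in> hom C (cDom C i) (cDom C i') \<and> b \<in> hom C (cCod C i) (cCod C i') \<and>
        c \<in> hom C (cCod C d) (cCod C d') \<and> is_iso C a \<and> is_iso C b \<and> is_iso C c \<and>
        cComp C i' a = cComp C b i \<and> cComp C d' b = cComp C c d)"

(* pushout of i : A -> B along f : A -> A', giving i' : A' -> P and f' : B -> P *)
definition is_pushout :: "('o,'m) addcat \<Rightarrow> 'm \<Rightarrow> 'm \<Rightarrow> 'm \<Rightarrow> 'm \<Rightarrow> bool" where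
  "is_pushout C i f i' f' \<longleftrightarrow>
     i \<in> cArr C \<and> f \<in> cArr C \<and> cDom C i = cDom C f \<and>
     i' \<in> hom C (cCod C f) (cCod C i') \<and> f' \<in> hom C (cCod C i) (cCod C i') \<and>
     cComp C i' f = cComp C f' i \<and>
     (\<forall>T\<in>cObj C. \<forall>u\<in>hom C (cCod C f) T. \<forall>v\<in>hom C (cCod C i) T.
        cComp C u f = cComp C v i \<longrightarrow>
        (\<exists>!w. w \<in> hom C (cCod C i') T \<and> cComp C w i' = u \<and> cComp C w f' = v))"

(* pullback of d : B -> C0 along f : C' -> C0, giving d' : Q -> C' and f' : Q -> B *)
definition is_pullback :: "('o,'m) addcat \<Rightarrow> 'm \<Rightarrow> 'm \<Rightarrow> 'm \<Rightarrow> 'm \<Rightarrow> bool" where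
  "is_pullback C d f d' f' \<longleftrightarrow>
     d \<in> cArr C \<and> f \<in> cArr C \<and> cCod C d = cCod C f \<and>
     d' \<in> hom C (cDom C d') (cDom C f) \<and> f' \<in> hom C (cDom C d') (cDom C d) \<and>
     cComp C f d' = cComp C d f' \<and>
     (\<forall>T\<in>cObj C. \<forall>u\<in>hom C T (cDom C f). \<forall>v\<in>hom C T (cDom C d).
        cComp C f u = cComp C d v \<longrightarrow>
        (\<exists>!w. w \<in> hom C T (cDom C d') \<and> cComp C d' w = u \<and> cComp C f' w = v))"

definition adm_mono :: "('o,'m) addcat \<Rightarrow> ('m \<times> 'm) set \<Rightarrow> 'm \<Rightarrow> bool" where
  "adm_mono C E i \<longleftrightarrow> (\<exists>d. (i, d) \<in> E)"

definition adm_epi :: "('o,'m) addcat \<Rightarrow> ('m \<times> 'm) set \<Rightarrow> 'm \<Rightarrow> bool" where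
  "adm_epi C E d \<longleftrightarrow> (\<exists>i. (i, d) \<in> E)"

definition exact_category :: "('o,'m) addcat \<Rightarrow> ('m \<times> 'm) set \<Rightarrow> bool" where
  "exact_category C E \<longleftrightarrow> is_additive C \<and>
     (\<forall>(i,d)\<in>E. is_kc_pair C i d) \<and>
     (\<forall>i d i' d'. (i,d) \<in> E \<and> is_kc_pair C i' d' \<and> iso_pairs C i d i' d' \<longrightarrow> (i',d') \<in> E) \<and>
     (\<forall>X\<in>cObj C. adm_mono C E (cId C X)) \<and>
     (\<forall>X\<in>cObj C. adm_epi C E (cId C X)) \<and>
     (\<forall>i j. adm_mono C E i \<and> adm_mono C E j \<and> cCod C i = cDom C j \<longrightarrow> adm_mono C E (cComp C j i)) \<and>
     (\<forall>d e. adm_epi C E d \<and> adm_epi C E e \<and> cCod C d = cDom C e \<longrightarrow> adm_epi C E (cComp C e d)) \<and>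
     (\<forall>i f. adm_mono C E i \<and> f \<in> cArr C \<and> cDom C f = cDom C i \<longrightarrow>
        (\<exists>i' f'. is_pushout C i f i' f' \<and> adm_mono C E i')) \<and>
     (\<forall>d f. adm_epi C E d \<and> f \<in> cArr C \<and> cCod C f = cCod C d \<longrightarrow>
        (\<exists>d' f'. is_pullback C d f d' f' \<and> adm_epi C E d'))"

definition esub :: "('o,'m) addcat \<Rightarrow> ('m \<times> 'm) set \<Rightarrow> 'o \<Rightarrow> 'o \<Rightarrow> bool" where
  "esub C E X Y \<longleftrightarrow> (\<exists>i\<in>hom C X Y. adm_mono C E i)"

definition epsub :: "('o,'m) addcat \<Rightarrow> ('m \<times> 'm) set \<Rightarrow> 'o \<Rightarrow> 'o \<Rightarrow> bool" where
  "epsub C E X Y \<longleftrightarrow> (\<exists>i\<in>hom C X Y. adm_mono C E i \<and> \<not> is_iso C i)"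

definition chain_lengths :: "('o,'m) addcat \<Rightarrow> ('m \<times> 'm) set \<Rightarrow> 'o \<Rightarrow> nat set" where
  "chain_lengths C E X = {n. \<exists>Xs :: nat \<Rightarrow> 'o. \<exists>fs :: nat \<Rightarrow> 'm.
      is_zero_obj C (Xs 0) \<and> Xs n = X \<and>
      (\<forall>k<n. fs k \<in> hom C (Xs k) (Xs (Suc k)) \<and> adm_mono C E (fs k) \<and> \<not> is_iso C (fs k))}"

definition elength :: "('o,'m) addcat \<Rightarrow> ('m \<times> 'm) set \<Rightarrow> 'o \<Rightarrow> enat" where
  "elength C E X = Sup (enat ` chain_lengths C E X)"

definition finite_exact :: "('o,'m) addcat \<Rightarrow> ('m \<times> 'm) set \<Rightarrow> bool" where
  "finite_exact C E \<longleftrightarrow> (\<forall>X\<in>cObj C. elength C E X < \<infinity>)"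

definition indecomposable :: "('o,'m) addcat \<Rightarrow> 'o \<Rightarrow> bool" where
  "indecomposable C X \<longleftrightarrow> X \<in> cObj C \<and> \<not> is_zero_obj C X \<and>
     (\<forall>A B i1 i2 p1 p2. A \<in> cObj C \<and> B \<in> cObj C \<and> is_biproduct C A B X i1 i2 p1 p2 \<longrightarrow>
        is_zero_obj C A \<or> is_zero_obj C B)"

definition gr_le :: "nat list \<Rightarrow> nat list \<Rightarrow> bool" where
  "gr_le x y \<longleftrightarrow> x = y \<or> strict_prefix x y \<or>
     (\<exists>i. i < length x \<and> i < length y \<and> take i x = take i y \<and> x ! i > y ! i)"

definition mu_seqs :: "('o,'m) addcat \<Rightarrow> ('m \<times> 'm) set \<Rightarrow> 'o \<Rightarrow> nat list set" where
  "mu_seqs C E X = {s. \<exists>n \<ge> 1. \<exists>Xs :: nat \<Rightarrow> 'o.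
      Xs (n - 1) = X \<and> (\<forall>k<n. indecomposable C (Xs k)) \<and>
      (\<forall>k. Suc k < n \<longrightarrow> epsub C E (Xs k) (Xs (Suc k))) \<and>
      s = map (\<lambda>k. the_enat (elength C E (Xs k))) [0..<n]}"

definition mu :: "('o,'m) addcat \<Rightarrow> ('m \<times> 'm) set \<Rightarrow> 'o \<Rightarrow> nat list" where
  "mu C E X = (THE m. m \<in> mu_seqs C E X \<and> (\<forall>s\<in>mu_seqs C E X. gr_le s m))"

end

theory Submission
  imports Defs
begin

text \<open>
  In a finite exact category every proper admissible subobject has strictly smaller length, so
  the length sequences of chains of indecomposables ending in \<open>X\<close> are strictly increasing
  lists bounded by \<open>l(X)\<close>; there are finitely many, and \<open>\<mu>(X)\<close> is their maximum for the
  total order \<open>\<lll>\<close>. Extending a chain of \<open>X\<close> by \<open>X \<subset> Y\<close> gives (GR1), the last entry of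
  \<open>\<mu>(X)\<close> is \<open>l(X)\<close> (GR2), and truncating the chain realising \<open>\<mu>(X)\<close> reduces (GR3) to
  a comparison of sequences. Admissible isomorphisms need care: they preserve lengths because
  their inverses are admissible too.
\<close>

section \<open>The order on finite sequences of naturals\<close>

lemma strict_prefix_iff_take: "strict_prefix x y \<longleftrightarrow> length x < length y \<and> take (length x) y = x"
  unfolding strict_prefix_def prefix_def
  by (metis append_eq_conv_conj append_take_drop_id length_append less_not_refl2 nat_less_le
      le_add1 self_append_conv)

lemma gr_le_iff_lexord: "gr_le x y \<longleftrightarrow> x = y \<or> (x, y) \<in> lexord {(a, b). b < a}"
  unfolding gr_le_def lexord_take_index_conv strict_prefix_iff_take by auto

lemma trans_lexord_greater: "trans (lexord {(a, b :: nat). b < a})"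
  by (rule lexord_transI) (auto intro: transI)

lemma gr_le_refl: "gr_le x x"
  by (simp add: gr_le_def)

lemma gr_le_trans: "gr_le x y \<Longrightarrow> gr_le y z \<Longrightarrow> gr_le x z"
  unfolding gr_le_iff_lexord using trans_lexord_greater by (meson transD)

lemma gr_le_antisym: "gr_le x y \<Longrightarrow> gr_le y x \<Longrightarrow> x = y"
  unfolding gr_le_iff_lexord
  using trans_lexord_greater lexord_irreflexive[of "{(a, b :: nat). b < a}" x]
  by (metis (no_types, lifting) case_prodD mem_Collect_eq order.irrefl transD)

lemma gr_le_total: "gr_le x y \<or> gr_le y x"
  unfolding gr_le_iff_lexord using lexord_linear[of "{(a, b :: nat). b < a}" x y] by force

lemma gr_le_greatest_exists:
  assumes "finite S" "S \<noteq> {}"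
  shows "\<exists>m\<in>S. \<forall>s\<in>S. gr_le s m"
  using assms
proof (induction S rule: finite_ne_induct)
  case (singleton x)
  then show ?case by (simp add: gr_le_refl)
next
  case (insert x F)
  then obtain m where "m \<in> F" "\<forall>s\<in>F. gr_le s m" by blast
  then show ?case using gr_le_total[of x m] gr_le_trans gr_le_refl by blast
qed

lemma gr_le_snoc:
  assumes "gr_le p y" "p \<noteq> y" "sorted_wrt (<) y" "y \<noteq> []" "last y \<le> a"
  shows "gr_le (p @ [a]) y"
proof -
  have "(p, y) \<in> lexord {(a, b). b < a}" using assms(1,2) by (simp add: gr_le_iff_lexord)
  then consider (prefix) b v where "y = p @ b # v"
    | (differ) u c d v w where "d < c" "p = u @ c # v" "y = u @ d # w"
    unfolding lexord_def by blast
  then show ?thesis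
  proof cases
    case (prefix b v)
    consider (equal) "y = p @ [a]" | (greater) "b < a"
      using assms(3,5) by (cases "v = []") (auto simp: prefix sorted_wrt_append le_less dest!: last_in_set)
    then show ?thesis
    proof cases
      case equal
      then show ?thesis by (simp add: gr_le_def)
    next
      case greater
      then have "(p @ [a], y) \<in> lexord {(a, b). b < a}"
        unfolding lexord_def prefix by blast
      then show ?thesis by (simp add: gr_le_iff_lexord)
    qed
  next
    case differ
    then have "(p @ [a], y) \<in> lexord {(a, b). b < a}"
      unfolding lexord_def by fastforce
    then show ?thesis by (simp add: gr_le_iff_lexord)
  qed
qed

lemma exact_category_preadditive: "exact_category C E \<Longrightarrow> is_preadditive C"
  by (simp add: exact_category_def is_additive_def)

lemma preadditive_category: "is_preadditive C \<Longrightarrow> is_category C"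
  by (simp add: is_preadditive_def)

lemma exact_category_category: "exact_category C E \<Longrightarrow> is_category C"
  by (rule preadditive_category[OF exact_category_preadditive])

lemma hom_objects: "is_category C \<Longrightarrow> f \<in> hom C X Y \<Longrightarrow> X \<in> cObj C \<and> Y \<in> cObj C"
  unfolding is_category_def hom_def by auto

lemma comp_in_hom:
  "is_category C \<Longrightarrow> f \<in> hom C X Y \<Longrightarrow> g \<in> hom C Y Z \<Longrightarrow> cComp C g f \<in> hom C X Z"
  unfolding is_category_def hom_def by auto

lemma id_in_hom: "is_category C \<Longrightarrow> X \<in> cObj C \<Longrightarrow> cId C X \<in> hom C X X"
  unfolding is_category_def by auto

lemma comp_id_left: "is_category C \<Longrightarrow> f \<in> hom C X Y \<Longrightarrow> cComp C (cId C Y) f = f"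
  unfolding is_category_def hom_def by auto

lemma comp_id_right: "is_category C \<Longrightarrow> f \<in> hom C X Y \<Longrightarrow> cComp C f (cId C X) = f"
  unfolding is_category_def hom_def by auto

lemma comp_assoc:
  "is_category C \<Longrightarrow> f \<in> hom C X Y \<Longrightarrow> g \<in> hom C Y Z \<Longrightarrow> h \<in> hom C Z W \<Longrightarrow>
    cComp C h (cComp C g f) = cComp C (cComp C h g) f"
  unfolding is_category_def hom_def by auto

lemma preadditive_hom_group:
  assumes "is_preadditive C" "X \<in> cObj C" "Y \<in> cObj C"
  shows "cZero C X Y \<in> hom C X Y \<and>
        (\<forall>f\<in>hom C X Y. \<forall>g\<in>hom C X Y. cAdd C f g \<in> hom C X Y) \<and>
        (\<forall>f\<in>hom C X Y. cNeg C f \<in> hom C X Y) \<and>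
        (\<forall>f\<in>hom C X Y. \<forall>g\<in>hom C X Y. \<forall>h\<in>hom C X Y.
            cAdd C (cAdd C f g) h = cAdd C f (cAdd C g h)) \<and>
        (\<forall>f\<in>hom C X Y. \<forall>g\<in>hom C X Y. cAdd C f g = cAdd C g f) \<and>
        (\<forall>f\<in>hom C X Y. cAdd C f (cZero C X Y) = f) \<and>
        (\<forall>f\<in>hom C X Y. cAdd C f (cNeg C f) = cZero C X Y)"
  using assms(1)[unfolded is_preadditive_def, THEN conjunct2, THEN conjunct1] assms(2,3) by blast

lemma preadditive_comp_add:
  assumes "is_preadditive C" "X \<in> cObj C" "Y \<in> cObj C" "Z \<in> cObj C"
  shows "(\<forall>f\<in>hom C X Y. \<forall>f'\<in>hom C X Y. \<forall>g\<in>hom C Y Z.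
            cComp C g (cAdd C f f') = cAdd C (cComp C g f) (cComp C g f')) \<and>
        (\<forall>f\<in>hom C X Y. \<forall>g\<in>hom C Y Z. \<forall>g'\<in>hom C Y Z.
            cComp C (cAdd C g g') f = cAdd C (cComp C g f) (cComp C g' f))"
  using assms(1)[unfolded is_preadditive_def, THEN conjunct2, THEN conjunct2] assms(2-4) by blast

lemma zero_in_hom:
  "is_preadditive C \<Longrightarrow> X \<in> cObj C \<Longrightarrow> Y \<in> cObj C \<Longrightarrow> cZero C X Y \<in> hom C X Y"
  by (simp add: preadditive_hom_group)

lemma hom_objects_preadditive:
  "is_preadditive C \<Longrightarrow> f \<in> hom C X Y \<Longrightarrow> X \<in> cObj C \<and> Y \<in> cObj C"
  by (rule hom_objects[OF preadditive_category])

lemma add_neg_right: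
  assumes "is_preadditive C" "f \<in> hom C X Y"
  shows "cAdd C f (cNeg C f) = cZero C X Y"
  using hom_objects_preadditive[OF assms] assms by (simp add: preadditive_hom_group)

lemma add_zero_right:
  assumes "is_preadditive C" "f \<in> hom C X Y"
  shows "cAdd C f (cZero C X Y) = f"
  using hom_objects_preadditive[OF assms] assms by (simp add: preadditive_hom_group)

lemma add_idem_eq_zero:
  assumes P: "is_preadditive C" and a: "a \<in> hom C X Y" and idem: "cAdd C a a = a"
  shows "a = cZero C X Y"
proof -
  have XY: "X \<in> cObj C" "Y \<in> cObj C" using hom_objects_preadditive[OF P a] by auto
  then have assoc: "cAdd C (cAdd C a a) (cNeg C a) = cAdd C a (cAdd C a (cNeg C a))"
    using preadditive_hom_group[OF P XY] a by blast
  have "cZero C X Y = cAdd C (cAdd C a a) (cNeg C a)"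
    using add_neg_right[OF P a] idem by simp
  also have "\<dots> = a"
    using assoc add_neg_right[OF P a] add_zero_right[OF P a] by simp
  finally show ?thesis by simp
qed

lemma comp_zero_right:
  assumes P: "is_preadditive C" and X: "X \<in> cObj C" and g: "g \<in> hom C Y Z"
  shows "cComp C g (cZero C X Y) = cZero C X Z"
proof (rule add_idem_eq_zero[OF P])
  have cat: "is_category C" using preadditive_category[OF P] .
  have Y: "Y \<in> cObj C" and Z: "Z \<in> cObj C" using hom_objects[OF cat g] by auto
  have z: "cZero C X Y \<in> hom C X Y" using zero_in_hom[OF P X Y] .
  show "cComp C g (cZero C X Y) \<in> hom C X Z" using comp_in_hom[OF cat z g] .
  have "cComp C g (cAdd C (cZero C X Y) (cZero C X Y))
      = cAdd C (cComp C g (cZero C X Y)) (cComp C g (cZero C X Y))"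
    using preadditive_comp_add[OF P X Y Z] z g by blast
  then show "cAdd C (cComp C g (cZero C X Y)) (cComp C g (cZero C X Y)) = cComp C g (cZero C X Y)"
    using add_zero_right[OF P z] by simp
qed

lemma comp_zero_left:
  assumes P: "is_preadditive C" and Z: "Z \<in> cObj C" and f: "f \<in> hom C X Y"
  shows "cComp C (cZero C Y Z) f = cZero C X Z"
proof (rule add_idem_eq_zero[OF P])
  have cat: "is_category C" using preadditive_category[OF P] .
  have X: "X \<in> cObj C" and Y: "Y \<in> cObj C" using hom_objects[OF cat f] by auto
  have z: "cZero C Y Z \<in> hom C Y Z" using zero_in_hom[OF P Y Z] .
  show "cComp C (cZero C Y Z) f \<in> hom C X Z" using comp_in_hom[OF cat f z] .
  have "cComp C (cAdd C (cZero C Y Z) (cZero C Y Z)) f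
      = cAdd C (cComp C (cZero C Y Z) f) (cComp C (cZero C Y Z) f)"
    using preadditive_comp_add[OF P X Y Z] z f by blast
  then show "cAdd C (cComp C (cZero C Y Z) f) (cComp C (cZero C Y Z) f) = cComp C (cZero C Y Z) f"
    using add_zero_right[OF P z] by simp
qed

lemma zero_obj_object: "is_zero_obj C Z \<Longrightarrow> Z \<in> cObj C"
  by (simp add: is_zero_obj_def)

lemma zero_obj_hom_from_unique:
  "is_zero_obj C Z \<Longrightarrow> X \<in> cObj C \<Longrightarrow> f \<in> hom C Z X \<Longrightarrow> g \<in> hom C Z X \<Longrightarrow> f = g"
  unfolding is_zero_obj_def by blast

lemma zero_obj_hom_to_unique:
  "is_zero_obj C Z \<Longrightarrow> X \<in> cObj C \<Longrightarrow> f \<in> hom C X Z \<Longrightarrow> g \<in> hom C X Z \<Longrightarrow> f = g"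
  unfolding is_zero_obj_def by blast

lemma zero_obj_if_id_eq_zero:
  assumes P: "is_preadditive C" and X: "X \<in> cObj C" and id0: "cId C X = cZero C X X"
  shows "is_zero_obj C X"
  unfolding is_zero_obj_def
proof (intro conjI ballI X)
  have cat: "is_category C" using preadditive_category[OF P] .
  fix Y assume Y: "Y \<in> cObj C"
  show "\<exists>!f. f \<in> hom C X Y"
  proof
    show "cZero C X Y \<in> hom C X Y" using zero_in_hom[OF P X Y] .
    fix f assume f: "f \<in> hom C X Y"
    then show "f = cZero C X Y"
      using comp_id_right[OF cat f] comp_zero_right[OF P X f] id0 by simp
  qed
  show "\<exists>!f. f \<in> hom C Y X"
  proof
    show "cZero C Y X \<in> hom C Y X" using zero_in_hom[OF P Y X] .
    fix f assume f: "f \<in> hom C Y X"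
    then show "f = cZero C Y X"
      using comp_id_left[OF cat f] comp_zero_left[OF P X f] id0 by simp
  qed
qed

lemma is_isoE:
  assumes "is_iso C i" "i \<in> hom C X Y"
  obtains g where "g \<in> hom C Y X" "cComp C g i = cId C X" "cComp C i g = cId C Y" "is_iso C g"
  using assms unfolding is_iso_def hom_def by auto

lemma id_is_iso: "is_category C \<Longrightarrow> X \<in> cObj C \<Longrightarrow> is_iso C (cId C X)"
  unfolding is_iso_def using id_in_hom[of C X] comp_id_left[of C "cId C X" X X]
  by (auto simp: hom_def)

lemma zero_obj_iso:
  assumes P: "is_preadditive C" and K: "is_zero_obj C K" and i: "i \<in> hom C K X" and "is_iso C i"
  shows "is_zero_obj C X"
proof -
  have cat: "is_category C" using preadditive_category[OF P] .
  have objs: "K \<in> cObj C" "X \<in> cObj C" using hom_objects[OF cat i] by auto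
  obtain g where g: "g \<in> hom C X K" "cComp C i g = cId C X" using is_isoE[OF \<open>is_iso C i\<close> i] by metis
  have "g = cZero C X K" using zero_obj_hom_to_unique[OF K objs(2) g(1) zero_in_hom[OF P objs(2,1)]] .
  then have "cId C X = cZero C X X" using g(2) comp_zero_right[OF P objs(2) i] by simp
  then show ?thesis using zero_obj_if_id_eq_zero[OF P objs(2)] by blast
qed

text \<open>If \<open>h\<close> inverts \<open>i \<circ> f\<close>, then \<open>h \<circ> i\<close> inverts \<open>f\<close>.\<close>

lemma comp_iso_not_iso:
  assumes cat: "is_category C" and f: "f \<in> hom C W X" and i: "i \<in> hom C X Y" and "is_iso C i"
    and not_iso: "\<not> is_iso C f"
  shows "\<not> is_iso C (cComp C i f)"
proof
  assume "is_iso C (cComp C i f)"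
  moreover have i_f: "cComp C i f \<in> hom C W Y" using comp_in_hom[OF cat f i] .
  ultimately obtain h where h: "h \<in> hom C Y W" "cComp C h (cComp C i f) = cId C W"
      "cComp C (cComp C i f) h = cId C Y"
    using is_isoE by metis
  obtain g where g: "g \<in> hom C Y X" "cComp C g i = cId C X"
    using is_isoE[OF \<open>is_iso C i\<close> i] by metis
  have hi: "cComp C h i \<in> hom C X W" using comp_in_hom[OF cat i h(1)] .
  have left: "cComp C (cComp C h i) f = cId C W"
    using h(2) comp_assoc[OF cat f i h(1)] by simp
  have "cComp C f (cComp C h i) = cComp C (cComp C g i) (cComp C f (cComp C h i))"
    using g(2) comp_id_left[OF cat comp_in_hom[OF cat hi f]] by simp
  also have "\<dots> = cComp C g (cComp C (cComp C (cComp C i f) h) i)"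
    using comp_assoc[OF cat hi f i] comp_assoc[OF cat i h(1) i_f]
      comp_assoc[OF cat comp_in_hom[OF cat hi f] i g(1)] by simp
  also have "\<dots> = cId C X"
    using h(3) comp_id_left[OF cat i] g(2) by simp
  finally have "is_iso C f"
    using f hi left unfolding is_iso_def by (auto simp: hom_def)
  with not_iso show False by contradiction
qed

section \<open>Admissible monics\<close>

lemma exact_pair_kc_pair: "exact_category C E \<Longrightarrow> (i, d) \<in> E \<Longrightarrow> is_kc_pair C i d"
  unfolding exact_category_def by (elim conjE) (drule (1) bspec, simp)

lemma exact_pair_iso_closed:
  "exact_category C E \<Longrightarrow> (i, d) \<in> E \<Longrightarrow> is_kc_pair C i' d' \<Longrightarrow> iso_pairs C i d i' d'
    \<Longrightarrow> (i', d') \<in> E"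
  by (simp add: exact_category_def)

lemma adm_mono_id: "exact_category C E \<Longrightarrow> X \<in> cObj C \<Longrightarrow> adm_mono C E (cId C X)"
  by (simp add: exact_category_def)

lemma adm_epi_id: "exact_category C E \<Longrightarrow> X \<in> cObj C \<Longrightarrow> adm_epi C E (cId C X)"
  by (simp add: exact_category_def)

lemma adm_mono_comp:
  "exact_category C E \<Longrightarrow> adm_mono C E i \<Longrightarrow> adm_mono C E j \<Longrightarrow> cCod C i = cDom C j
    \<Longrightarrow> adm_mono C E (cComp C j i)"
  by (simp add: exact_category_def)

lemma kernelD:
  "is_kernel C i d \<Longrightarrow> i \<in> cArr C \<and> d \<in> cArr C \<and> cCod C i = cDom C d \<and>
     cComp C d i = cZero C (cDom C i) (cCod C d)"
  by (simp add: is_kernel_def)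

lemma kernel_factor_unique:
  "is_kernel C i d \<Longrightarrow> T \<in> cObj C \<Longrightarrow> f \<in> hom C T (cDom C d) \<Longrightarrow>
    cComp C d f = cZero C T (cCod C d) \<Longrightarrow> \<exists>!g. g \<in> hom C T (cDom C i) \<and> cComp C i g = f"
  unfolding is_kernel_def by (elim conjE) (drule (1) bspec, drule (1) bspec, drule (1) mp)

lemma cokernelD:
  "is_cokernel C d i \<Longrightarrow> i \<in> cArr C \<and> d \<in> cArr C \<and> cCod C i = cDom C d \<and>
     cComp C d i = cZero C (cDom C i) (cCod C d)"
  by (simp add: is_cokernel_def)

lemma cokernel_factor_unique:
  "is_cokernel C d i \<Longrightarrow> T \<in> cObj C \<Longrightarrow> f \<in> hom C (cCod C i) T \<Longrightarrow>
    cComp C f i = cZero C (cDom C i) T \<Longrightarrow> \<exists>!g. g \<in> hom C (cCod C d) T \<and> cComp C g d = f"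
  unfolding is_cokernel_def by (elim conjE) (drule (1) bspec, drule (1) bspec, drule (1) mp)

lemma kernel_of_id_zero_obj:
  assumes P: "is_preadditive C" and X: "X \<in> cObj C" and ker: "is_kernel C i (cId C X)"
  shows "is_zero_obj C (cDom C i)"
proof -
  have cat: "is_category C" using preadditive_category[OF P] .
  define K where "K = cDom C i"
  have idX: "cId C X \<in> hom C X X" using id_in_hom[OF cat X] .
  have i: "i \<in> hom C K X" and i0: "cComp C (cId C X) i = cZero C K X"
    using kernelD[OF ker] idX unfolding hom_def K_def by auto
  have K: "K \<in> cObj C" using hom_objects[OF cat i] by auto
  have i_zero: "i = cZero C K X" using comp_id_left[OF cat i] i0 by simp
  have "\<exists>!g. g \<in> hom C K K \<and> cComp C i g = i"
    using kernel_factor_unique[OF ker K] i i0 idX unfolding K_def hom_def by auto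
  moreover have "cComp C i (cId C K) = i" using comp_id_right[OF cat i] .
  moreover have "cComp C i (cZero C K K) = i" using comp_zero_right[OF P K i] i_zero by simp
  ultimately have "cId C K = cZero C K K"
    using id_in_hom[OF cat K] zero_in_hom[OF P K K] by blast
  then show ?thesis unfolding K_def[symmetric] by (rule zero_obj_if_id_eq_zero[OF P K])
qed

lemma cokernel_of_id_zero_obj:
  assumes P: "is_preadditive C" and X: "X \<in> cObj C" and cok: "is_cokernel C d (cId C X)"
  shows "is_zero_obj C (cCod C d)"
proof -
  have cat: "is_category C" using preadditive_category[OF P] .
  define Z where "Z = cCod C d"
  have idX: "cId C X \<in> hom C X X" using id_in_hom[OF cat X] .
  have d: "d \<in> hom C X Z" and d0: "cComp C d (cId C X) = cZero C X Z"
    using cokernelD[OF cok] idX unfolding hom_def Z_def by auto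
  have Z: "Z \<in> cObj C" using hom_objects[OF cat d] by auto
  have d_zero: "d = cZero C X Z" using comp_id_right[OF cat d] d0 by simp
  have "\<exists>!g. g \<in> hom C Z Z \<and> cComp C g d = d"
    using cokernel_factor_unique[OF cok Z] d d0 idX unfolding Z_def hom_def by auto
  moreover have "cComp C (cId C Z) d = d" using comp_id_left[OF cat d] .
  moreover have "cComp C (cZero C Z Z) d = d" using comp_zero_left[OF P Z d] d_zero by simp
  ultimately have "cId C Z = cZero C Z Z"
    using id_in_hom[OF cat Z] zero_in_hom[OF P Z Z] by blast
  then show ?thesis unfolding Z_def[symmetric] by (rule zero_obj_if_id_eq_zero[OF P Z])
qed

lemma adm_mono_from_zero_obj:
  assumes EC: "exact_category C E" and X: "X \<in> cObj C"
  obtains K i where "is_zero_obj C K" "i \<in> hom C K X" "adm_mono C E i"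
proof -
  have P: "is_preadditive C" using exact_category_preadditive[OF EC] .
  obtain i where iE: "(i, cId C X) \<in> E" using adm_epi_id[OF EC X] unfolding adm_epi_def by blast
  then have ker: "is_kernel C i (cId C X)" using exact_pair_kc_pair[OF EC iE] by (simp add: is_kc_pair_def)
  then have "i \<in> hom C (cDom C i) X"
    using kernelD[OF ker] id_in_hom[OF preadditive_category[OF P] X] unfolding hom_def by auto
  moreover have "adm_mono C E i" using iE unfolding adm_mono_def by blast
  ultimately show ?thesis using that kernel_of_id_zero_obj[OF P X ker] by blast
qed

lemma iso_kernel_zero:
  assumes P: "is_preadditive C" and g: "g \<in> hom C Y X" and "is_iso C g" and Z: "Z \<in> cObj C"
  shows "is_kernel C g (cZero C X Z)"
  unfolding is_kernel_def
proof (intro conjI ballI impI)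
  have cat: "is_category C" using preadditive_category[OF P] .
  have X: "X \<in> cObj C" using hom_objects[OF cat g] by auto
  obtain h where h: "h \<in> hom C X Y" "cComp C h g = cId C Y" "cComp C g h = cId C X"
    using is_isoE[OF \<open>is_iso C g\<close> g] by metis
  have z: "cZero C X Z \<in> hom C X Z" using zero_in_hom[OF P X Z] .
  show "g \<in> cArr C" "cZero C X Z \<in> cArr C" "cCod C g = cDom C (cZero C X Z)"
    "cComp C (cZero C X Z) g = cZero C (cDom C g) (cCod C (cZero C X Z))"
    using g z comp_zero_left[OF P Z g] by (auto simp: hom_def)
  fix T f assume "f \<in> hom C T (cDom C (cZero C X Z))"
  then have f: "f \<in> hom C T X" using z by (simp add: hom_def)
  show "\<exists>!w. w \<in> hom C T (cDom C g) \<and> cComp C g w = f"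
  proof
    show "cComp C h f \<in> hom C T (cDom C g) \<and> cComp C g (cComp C h f) = f"
      using comp_in_hom[OF cat f h(1)] g comp_assoc[OF cat f h(1) g] h(3) comp_id_left[OF cat f]
      by (simp add: hom_def)
    fix w assume "w \<in> hom C T (cDom C g) \<and> cComp C g w = f"
    then have w: "w \<in> hom C T Y" and gw: "cComp C g w = f" using g by (auto simp: hom_def)
    show "w = cComp C h f"
      using comp_assoc[OF cat w g h(1)] h(2) comp_id_left[OF cat w] gw by simp
  qed
qed

lemma iso_cokernel_zero:
  assumes P: "is_preadditive C" and g: "g \<in> hom C Y X" and "is_iso C g" and Z: "is_zero_obj C Z"
  shows "is_cokernel C (cZero C X Z) g"
  unfolding is_cokernel_def
proof (intro conjI ballI impI)
  have cat: "is_category C" using preadditive_category[OF P] .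
  have X: "X \<in> cObj C" using hom_objects[OF cat g] by auto
  obtain h where h: "h \<in> hom C X Y" "cComp C g h = cId C X"
    using is_isoE[OF \<open>is_iso C g\<close> g] by metis
  have z: "cZero C X Z \<in> hom C X Z" using zero_in_hom[OF P X zero_obj_object[OF Z]] .
  show "g \<in> cArr C" "cZero C X Z \<in> cArr C" "cCod C g = cDom C (cZero C X Z)"
    "cComp C (cZero C X Z) g = cZero C (cDom C g) (cCod C (cZero C X Z))"
    using g z comp_zero_left[OF P zero_obj_object[OF Z] g] by (auto simp: hom_def)
  fix T f assume T: "T \<in> cObj C" and "f \<in> hom C (cCod C g) T"
    and "cComp C f g = cZero C (cDom C g) T"
  then have f: "f \<in> hom C X T" and fg: "cComp C f g = cZero C Y T" using g by (auto simp: hom_def)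
  have "f = cComp C (cComp C f g) h"
    using comp_assoc[OF cat h(1) g f] h(2) comp_id_right[OF cat f] by simp
  then have f_zero: "f = cZero C X T" using fg comp_zero_left[OF P T h(1)] by simp
  have zT: "cZero C Z T \<in> hom C Z T" using zero_in_hom[OF P zero_obj_object[OF Z] T] .
  show "\<exists>!w. w \<in> hom C (cCod C (cZero C X Z)) T \<and> cComp C w (cZero C X Z) = f"
  proof
    show "cZero C Z T \<in> hom C (cCod C (cZero C X Z)) T \<and> cComp C (cZero C Z T) (cZero C X Z) = f"
      using zT z f_zero comp_zero_left[OF P T z] by (simp add: hom_def)
    fix w assume "w \<in> hom C (cCod C (cZero C X Z)) T \<and> cComp C w (cZero C X Z) = f"
    then have "w \<in> hom C Z T" using z by (simp add: hom_def)
    then show "w = cZero C Z T" using zero_obj_hom_from_unique[OF Z T _ zT] by blast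
  qed
qed

text \<open>An isomorphism \<open>g\<close> is admissible because \<open>(g, 0)\<close> is isomorphic to the admissible
  pair \<open>(id, d)\<close>, whose cokernel object is zero.\<close>

lemma iso_adm_mono:
  assumes EC: "exact_category C E" and g: "g \<in> hom C Y X" and "is_iso C g"
  shows "adm_mono C E g"
proof -
  have P: "is_preadditive C" using exact_category_preadditive[OF EC] .
  have cat: "is_category C" using preadditive_category[OF P] .
  have objs: "X \<in> cObj C" "Y \<in> cObj C" using hom_objects[OF cat g] by auto
  obtain d where dE: "(cId C Y, d) \<in> E" using adm_mono_id[OF EC objs(2)] unfolding adm_mono_def by blast
  define Z where "Z = cCod C d"
  have cok: "is_cokernel C d (cId C Y)"
    using exact_pair_kc_pair[OF EC dE] by (simp add: is_kc_pair_def)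
  have Z: "is_zero_obj C Z" unfolding Z_def using cokernel_of_id_zero_obj[OF P objs(2) cok] .
  have d: "d \<in> hom C Y Z"
    using cokernelD[OF cok] id_in_hom[OF cat objs(2)] unfolding hom_def Z_def by auto
  have z: "cZero C X Z \<in> hom C X Z" using zero_in_hom[OF P objs(1) zero_obj_object[OF Z]] .
  have "iso_pairs C (cId C Y) d g (cZero C X Z)"
    unfolding iso_pairs_def
  proof (intro exI conjI)
    show "cId C Y \<in> hom C (cDom C (cId C Y)) (cDom C g)" "g \<in> hom C (cCod C (cId C Y)) (cCod C g)"
      "cId C Z \<in> hom C (cCod C d) (cCod C (cZero C X Z))"
      using id_in_hom[OF cat zero_obj_object[OF Z]] id_in_hom[OF cat objs(2)] g z d
      by (auto simp: hom_def)
    show "is_iso C (cId C Y)" "is_iso C g" "is_iso C (cId C Z)"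
      using id_is_iso[OF cat] objs \<open>is_iso C g\<close> zero_obj_object[OF Z] by auto
    show "cComp C g (cId C Y) = cComp C g (cId C Y)" ..
    show "cComp C (cZero C X Z) g = cComp C (cId C Z) d"
      using zero_obj_hom_to_unique[OF Z objs(2) comp_in_hom[OF cat g z]
          comp_in_hom[OF cat d id_in_hom[OF cat zero_obj_object[OF Z]]]] .
  qed
  moreover have "is_kc_pair C g (cZero C X Z)"
    using iso_kernel_zero[OF P g \<open>is_iso C g\<close> zero_obj_object[OF Z]] iso_cokernel_zero[OF P g \<open>is_iso C g\<close> Z]
    by (simp add: is_kc_pair_def)
  ultimately have "(g, cZero C X Z) \<in> E" using exact_pair_iso_closed[OF EC dE] by blast
  then show ?thesis unfolding adm_mono_def by blast
qed

section \<open>The \<open>\<E>\<close>-length\<close>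

lemma chain_lengths_nonempty:
  assumes EC: "exact_category C E" and X: "X \<in> cObj C"
  shows "chain_lengths C E X \<noteq> {}"
proof (cases "is_zero_obj C X")
  case True
  then have "0 \<in> chain_lengths C E X"
    unfolding chain_lengths_def by (intro CollectI exI[of _ "\<lambda>_. X"]) auto
  then show ?thesis by blast
next
  case False
  obtain K i where K: "is_zero_obj C K" and i: "i \<in> hom C K X" and "adm_mono C E i"
    using adm_mono_from_zero_obj[OF EC X] .
  moreover have "\<not> is_iso C i" using zero_obj_iso[OF exact_category_preadditive[OF EC] K i] False by blast
  ultimately have "1 \<in> chain_lengths C E X"
    unfolding chain_lengths_def
    by (intro CollectI exI[of _ "\<lambda>k. if k = 0 then K else X"] exI[of _ "\<lambda>_. i"]) auto
  then show ?thesis by blast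
qed

lemma elength_attained:
  assumes "exact_category C E" "finite_exact C E" "X \<in> cObj C"
  obtains n where "n \<in> chain_lengths C E X" "elength C E X = enat n"
proof -
  let ?A = "enat ` chain_lengths C E X"
  have "?A \<noteq> {}" using chain_lengths_nonempty[OF assms(1,3)] by blast
  moreover have "finite ?A"
    using assms(2,3) \<open>?A \<noteq> {}\<close> unfolding finite_exact_def elength_def Sup_enat_def
    by (auto split: if_splits)
  ultimately have "Sup ?A \<in> ?A" unfolding Sup_enat_def by (simp add: Max_in)
  then show ?thesis using that unfolding elength_def by blast
qed

lemma enat_le_elength: "n \<in> chain_lengths C E X \<Longrightarrow> enat n \<le> elength C E X"
  unfolding elength_def by (simp add: Sup_upper)

lemma elength_less_if_epsub:
  assumes EC: "exact_category C E" and FE: "finite_exact C E" and sub: "epsub C E X Y"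
  shows "elength C E X < elength C E Y"
proof -
  obtain i where i: "i \<in> hom C X Y" "adm_mono C E i" "\<not> is_iso C i"
    using sub unfolding epsub_def by blast
  have "X \<in> cObj C" using hom_objects[OF exact_category_category[OF EC] i(1)] by blast
  then obtain n where n: "n \<in> chain_lengths C E X" "elength C E X = enat n"
    using elength_attained[OF EC FE] by blast
  then obtain Xs fs where c: "is_zero_obj C (Xs 0)" "Xs n = X"
      "\<forall>k<n. fs k \<in> hom C (Xs k) (Xs (Suc k)) \<and> adm_mono C E (fs k) \<and> \<not> is_iso C (fs k)"
    unfolding chain_lengths_def by blast
  have "Suc n \<in> chain_lengths C E Y"
    unfolding chain_lengths_def
    by (intro CollectI exI[of _ "Xs(Suc n := Y)"] exI[of _ "fs(n := i)"])
      (use c i in \<open>auto simp: less_Suc_eq\<close>)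
  then have "enat (Suc n) \<le> elength C E Y" by (rule enat_le_elength)
  then show ?thesis using n(2) by (simp add: Suc_ile_eq)
qed

lemma chain_lengths_subset_if_iso:
  assumes EC: "exact_category C E" and i: "i \<in> hom C X Y" and "adm_mono C E i" and "is_iso C i"
  shows "chain_lengths C E X \<subseteq> chain_lengths C E Y"
proof
  have cat: "is_category C" using exact_category_category[OF EC] .
  fix n assume "n \<in> chain_lengths C E X"
  then obtain Xs fs where c: "is_zero_obj C (Xs 0)" "Xs n = X"
      "\<forall>k<n. fs k \<in> hom C (Xs k) (Xs (Suc k)) \<and> adm_mono C E (fs k) \<and> \<not> is_iso C (fs k)"
    unfolding chain_lengths_def by blast
  show "n \<in> chain_lengths C E Y"
  proof (cases n)
    case 0
    then have "is_zero_obj C Y"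
      using zero_obj_iso[OF exact_category_preadditive[OF EC] _ i \<open>is_iso C i\<close>] c by simp
    then show ?thesis unfolding chain_lengths_def 0 by (intro CollectI exI[of _ "\<lambda>_. Y"]) auto
  next
    case (Suc m)
    have fm: "fs m \<in> hom C (Xs m) X" "adm_mono C E (fs m)" "\<not> is_iso C (fs m)" using c Suc by auto
    let ?g = "cComp C i (fs m)"
    have "?g \<in> hom C (Xs m) Y" using comp_in_hom[OF cat fm(1) i] .
    moreover have "adm_mono C E ?g"
      using adm_mono_comp[OF EC fm(2) \<open>adm_mono C E i\<close>] fm(1) i by (simp add: hom_def)
    moreover have "\<not> is_iso C ?g" using comp_iso_not_iso[OF cat fm(1) i \<open>is_iso C i\<close> fm(3)] .
    ultimately show ?thesis
      unfolding chain_lengths_def Suc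
      by (intro CollectI exI[of _ "Xs(Suc m := Y)"] exI[of _ "fs(m := ?g)"])
        (use c Suc in \<open>auto simp: less_Suc_eq\<close>)
  qed
qed

lemma elength_eq_if_iso:
  assumes EC: "exact_category C E" and i: "i \<in> hom C X Y" and "adm_mono C E i" and "is_iso C i"
  shows "elength C E X = elength C E Y"
proof -
  obtain g where g: "g \<in> hom C Y X" "is_iso C g" using is_isoE[OF \<open>is_iso C i\<close> i] by metis
  have "chain_lengths C E X = chain_lengths C E Y"
    using chain_lengths_subset_if_iso[OF EC i \<open>adm_mono C E i\<close> \<open>is_iso C i\<close>]
      chain_lengths_subset_if_iso[OF EC g(1) iso_adm_mono[OF EC g] g(2)] by blast
  then show ?thesis unfolding elength_def by simp
qed

lemma epsub_comp_iso:
  assumes EC: "exact_category C E" and "epsub C E W X" and i: "i \<in> hom C X Y"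
    and "adm_mono C E i" and "is_iso C i"
  shows "epsub C E W Y"
proof -
  have cat: "is_category C" using exact_category_category[OF EC] .
  obtain f where f: "f \<in> hom C W X" "adm_mono C E f" "\<not> is_iso C f"
    using \<open>epsub C E W X\<close> unfolding epsub_def by blast
  show ?thesis unfolding epsub_def
    using comp_in_hom[OF cat f(1) i] adm_mono_comp[OF EC f(2) \<open>adm_mono C E i\<close>] f(1) i
      comp_iso_not_iso[OF cat f(1) i \<open>is_iso C i\<close> f(3)]
    by (auto simp: hom_def)
qed

section \<open>The measure \<open>\<mu>\<close>\<close>

lemma indecomposable_object: "indecomposable C X \<Longrightarrow> X \<in> cObj C"
  by (simp add: indecomposable_def)

lemma elength_finite: "finite_exact C E \<Longrightarrow> X \<in> cObj C \<Longrightarrow> elength C E X \<noteq> \<infinity>"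
  by (simp add: finite_exact_def)

lemma the_enat_strict_mono: "x < y \<Longrightarrow> y \<noteq> \<infinity> \<Longrightarrow> the_enat x < the_enat y"
  by (cases x; cases y) auto

lemma the_enat_mono: "x \<le> y \<Longrightarrow> y \<noteq> \<infinity> \<Longrightarrow> the_enat x \<le> the_enat y"
  by (cases x; cases y) auto

lemma mu_seqs_strict_sorted:
  assumes EC: "exact_category C E" and FE: "finite_exact C E" and s: "s \<in> mu_seqs C E X"
  shows "sorted_wrt (<) s \<and> s \<noteq> [] \<and> last s = the_enat (elength C E X)"
proof -
  obtain n Xs where n: "n \<ge> 1" "Xs (n - 1) = X" "\<forall>k<n. indecomposable C (Xs k)"
    "\<forall>k. Suc k < n \<longrightarrow> epsub C E (Xs k) (Xs (Suc k))"
    and s_def: "s = map (\<lambda>k. the_enat (elength C E (Xs k))) [0..<n]"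
    using s unfolding mu_seqs_def by blast
  have step: "the_enat (elength C E (Xs k)) < the_enat (elength C E (Xs (Suc k)))" if "Suc k < n" for k
  proof (rule the_enat_strict_mono)
    show "elength C E (Xs k) < elength C E (Xs (Suc k))"
      using elength_less_if_epsub[OF EC FE] n(4) that by blast
    show "elength C E (Xs (Suc k)) \<noteq> \<infinity>"
      using elength_finite[OF FE indecomposable_object] n(3) that by blast
  qed
  have "sorted_wrt (<) s"
    unfolding sorted_wrt_iff_nth_Suc_transp[OF transp_on_less] using step by (simp add: s_def)
  moreover have "s \<noteq> []" "last s = the_enat (elength C E X)"
    using n(1,2) by (auto simp: s_def last_map)
  ultimately show ?thesis by blast
qed

lemma strict_sorted_le_last: "sorted_wrt (<) xs \<Longrightarrow> x \<in> set xs \<Longrightarrow> x \<le> (last xs :: 'a :: linorder)"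
  by (induction xs) (auto intro: less_imp_le last_in_set)

lemma finite_strict_sorted_lists:
  assumes "finite A"
  shows "finite {xs. sorted_wrt (<) xs \<and> set xs \<subseteq> (A :: 'a :: linorder set)}"
proof (rule finite_imageD[where f = set])
  show "finite (set ` {xs. sorted_wrt (<) xs \<and> set xs \<subseteq> A})"
    using assms by (auto intro: finite_subset[of _ "Pow A"])
  show "inj_on set {xs. sorted_wrt (<) xs \<and> set xs \<subseteq> A}"
    by (rule inj_onI) (simp add: strict_sorted_equal)
qed

lemma finite_mu_seqs:
  assumes "exact_category C E" "finite_exact C E"
  shows "finite (mu_seqs C E X)"
proof (rule finite_subset)
  show "mu_seqs C E X \<subseteq> {xs. sorted_wrt (<) xs \<and> set xs \<subseteq> {..the_enat (elength C E X)}}"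
    using mu_seqs_strict_sorted[OF assms] strict_sorted_le_last by fastforce
qed (rule finite_strict_sorted_lists, simp)

lemma mu_seqs_singleton: "indecomposable C X \<Longrightarrow> [the_enat (elength C E X)] \<in> mu_seqs C E X"
  unfolding mu_seqs_def by (intro CollectI exI[of _ 1] conjI exI[of _ "\<lambda>_. X"]) auto

lemma mu_seqs_snoc:
  assumes s: "s \<in> mu_seqs C E W" and "epsub C E W X" and "indecomposable C X"
  shows "s @ [the_enat (elength C E X)] \<in> mu_seqs C E X"
proof -
  obtain n Xs where n: "n \<ge> 1" "Xs (n - 1) = W" "\<forall>k<n. indecomposable C (Xs k)"
    "\<forall>k. Suc k < n \<longrightarrow> epsub C E (Xs k) (Xs (Suc k))"
    and s_def: "s = map (\<lambda>k. the_enat (elength C E (Xs k))) [0..<n]"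
    using s unfolding mu_seqs_def by blast
  show ?thesis
    unfolding mu_seqs_def
  proof (intro CollectI exI[of _ "Suc n"] conjI exI[of _ "Xs(n := X)"] allI impI)
    fix k
    show "k < Suc n \<Longrightarrow> indecomposable C ((Xs(n := X)) k)"
      using n(3) \<open>indecomposable C X\<close> by (cases "k = n") auto
    show "Suc k < Suc n \<Longrightarrow> epsub C E ((Xs(n := X)) k) ((Xs(n := X)) (Suc k))"
      using n(1,2,4) \<open>epsub C E W X\<close> by (cases "Suc k = n") auto
  qed (auto simp: s_def)
qed

lemma mu_seqs_butlast:
  assumes s: "s \<in> mu_seqs C E X" and "length s \<ge> 2"
  obtains X' where "indecomposable C X'" "epsub C E X' X" "butlast s \<in> mu_seqs C E X'"
proof -
  obtain n Xs where n: "n \<ge> 1" "Xs (n - 1) = X" "\<forall>k<n. indecomposable C (Xs k)"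
    "\<forall>k. Suc k < n \<longrightarrow> epsub C E (Xs k) (Xs (Suc k))"
    and s_def: "s = map (\<lambda>k. the_enat (elength C E (Xs k))) [0..<n]"
    using s unfolding mu_seqs_def by blast
  obtain m where m: "n = Suc (Suc m)" using \<open>length s \<ge> 2\<close> by (auto simp: s_def dest!: le_Suc_ex)
  have "butlast s \<in> mu_seqs C E (Xs m)"
    unfolding mu_seqs_def
    by (intro CollectI exI[of _ "Suc m"] conjI exI[of _ Xs] allI impI)
      (use n m in \<open>auto simp: s_def butlast_append\<close>)
  moreover have "indecomposable C (Xs m)" "epsub C E (Xs m) X" using n m by auto
  ultimately show ?thesis using that by blast
qed

lemma mu_seqs_transfer_iso:
  assumes EC: "exact_category C E" and s: "s \<in> mu_seqs C E X" and "indecomposable C Y"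
    and i: "i \<in> hom C X Y" "adm_mono C E i" "is_iso C i"
  shows "s \<in> mu_seqs C E Y"
proof -
  obtain n Xs where n: "n \<ge> 1" "Xs (n - 1) = X" "\<forall>k<n. indecomposable C (Xs k)"
    "\<forall>k. Suc k < n \<longrightarrow> epsub C E (Xs k) (Xs (Suc k))"
    and s_def: "s = map (\<lambda>k. the_enat (elength C E (Xs k))) [0..<n]"
    using s unfolding mu_seqs_def by blast
  let ?Ys = "Xs(n - 1 := Y)"
  have "s = map (\<lambda>k. the_enat (elength C E (?Ys k))) [0..<n]"
    using elength_eq_if_iso[OF EC i] n(2) by (auto simp: s_def)
  moreover have "epsub C E (?Ys k) (?Ys (Suc k))" if "Suc k < n" for k
  proof -
    have "epsub C E (Xs k) (Xs (Suc k))" using n(4) that by blast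
    then show ?thesis using n(2) that epsub_comp_iso[OF EC _ i] by (cases "Suc k = n - 1") auto
  qed
  ultimately show ?thesis
    unfolding mu_seqs_def using n(1,3) \<open>indecomposable C Y\<close> by (intro CollectI exI[of _ n] conjI exI[of _ ?Ys]) auto
qed

lemma mu_greatest:
  assumes EC: "exact_category C E" and FE: "finite_exact C E" and "indecomposable C X"
  shows "mu C E X \<in> mu_seqs C E X" "s \<in> mu_seqs C E X \<Longrightarrow> gr_le s (mu C E X)"
proof -
  obtain m where m: "m \<in> mu_seqs C E X" "\<forall>s\<in>mu_seqs C E X. gr_le s m"
    using gr_le_greatest_exists[OF finite_mu_seqs[OF EC FE]] mu_seqs_singleton[OF \<open>indecomposable C X\<close>]
    by blast
  have "mu C E X = m" unfolding mu_def by (rule the_equality) (use m gr_le_antisym in blast)+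
  then show "mu C E X \<in> mu_seqs C E X" "s \<in> mu_seqs C E X \<Longrightarrow> gr_le s (mu C E X)" using m by auto
qed

section \<open>The Gabriel--Roiter axioms\<close>

lemma mu_mono:
  assumes EC: "exact_category C E" and FE: "finite_exact C E"
    and X: "indecomposable C X" and Y: "indecomposable C Y" and "esub C E X Y"
  shows "gr_le (mu C E X) (mu C E Y)"
proof -
  obtain i where i: "i \<in> hom C X Y" "adm_mono C E i" using \<open>esub C E X Y\<close> unfolding esub_def by blast
  show ?thesis
  proof (cases "is_iso C i")
    case True
    then have "mu C E X \<in> mu_seqs C E Y"
      using mu_seqs_transfer_iso[OF EC mu_greatest(1)[OF EC FE X] Y i] by blast
    then show ?thesis by (rule mu_greatest(2)[OF EC FE Y])
  next
    case False
    then have "epsub C E X Y" using i unfolding epsub_def by blast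
    then have "mu C E X @ [the_enat (elength C E Y)] \<in> mu_seqs C E Y"
      using mu_seqs_snoc[OF mu_greatest(1)[OF EC FE X] _ Y] by blast
    then have "gr_le (mu C E X @ [the_enat (elength C E Y)]) (mu C E Y)"
      by (rule mu_greatest(2)[OF EC FE Y])
    moreover have "gr_le (mu C E X) (mu C E X @ [the_enat (elength C E Y)])"
      by (simp add: gr_le_def strict_prefix_def)
    ultimately show ?thesis using gr_le_trans by blast
  qed
qed

lemma elength_eq_if_mu_eq:
  assumes EC: "exact_category C E" and FE: "finite_exact C E"
    and X: "indecomposable C X" and Y: "indecomposable C Y" and "mu C E X = mu C E Y"
  shows "elength C E X = elength C E Y"
proof -
  have "the_enat (elength C E X) = the_enat (elength C E Y)"
    using mu_seqs_strict_sorted[OF EC FE mu_greatest(1)[OF EC FE X]]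
      mu_seqs_strict_sorted[OF EC FE mu_greatest(1)[OF EC FE Y]] \<open>mu C E X = mu C E Y\<close> by simp
  then show ?thesis
    using elength_finite[OF FE indecomposable_object[OF X]] elength_finite[OF FE indecomposable_object[OF Y]]
    by (cases "elength C E X"; cases "elength C E Y") auto
qed

text \<open>Dropping the top of the chain realising \<open>\<mu>(X)\<close> leaves a chain of a proper subobject \<open>X'\<close>,
  so its sequence is at most \<open>\<mu>(X')\<close> and thus strictly below \<open>\<mu>(Y)\<close>; appending
  \<open>l(X) \<ge> l(Y)\<close> keeps it below because \<open>\<mu>(Y)\<close> is strictly increasing.\<close>

lemma mu_le_if_proper_subobjects_below:
  assumes EC: "exact_category C E" and FE: "finite_exact C E"
    and X: "indecomposable C X" and Y: "indecomposable C Y" and "elength C E Y \<le> elength C E X"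
    and below: "\<And>X'. indecomposable C X' \<Longrightarrow> epsub C E X' X
      \<Longrightarrow> gr_le (mu C E X') (mu C E Y) \<and> mu C E X' \<noteq> mu C E Y"
  shows "gr_le (mu C E X) (mu C E Y)"
proof -
  let ?s = "mu C E X" and ?y = "mu C E Y"
  have s: "?s \<noteq> []" "last ?s = the_enat (elength C E X)"
    using mu_seqs_strict_sorted[OF EC FE mu_greatest(1)[OF EC FE X]] by auto
  have y: "sorted_wrt (<) ?y" "?y \<noteq> []" "last ?y = the_enat (elength C E Y)"
    using mu_seqs_strict_sorted[OF EC FE mu_greatest(1)[OF EC FE Y]] by auto
  have "last ?y \<le> last ?s"
    using s(2) y(3) the_enat_mono[OF \<open>elength C E Y \<le> elength C E X\<close>]
      elength_finite[OF FE indecomposable_object[OF X]] by simp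
  moreover have "gr_le (butlast ?s) ?y \<and> butlast ?s \<noteq> ?y"
  proof (cases "length ?s \<ge> 2")
    case True
    then obtain X' where X': "indecomposable C X'" "epsub C E X' X" "butlast ?s \<in> mu_seqs C E X'"
      using mu_seqs_butlast[OF mu_greatest(1)[OF EC FE X]] by blast
    have "gr_le (butlast ?s) (mu C E X')" using mu_greatest(2)[OF EC FE X'(1) X'(3)] .
    moreover have "gr_le (mu C E X') ?y" "mu C E X' \<noteq> ?y" using below[OF X'(1,2)] by auto
    ultimately show ?thesis using gr_le_trans[of "butlast ?s"] gr_le_antisym[of "mu C E X'"] by metis
  next
    case False
    then have "butlast ?s = []" by (simp add: butlast_conv_take)
    then show ?thesis using y(2) by (simp add: gr_le_def strict_prefix_def)
  qed
  ultimately have "gr_le (butlast ?s @ [last ?s]) ?y" using gr_le_snoc y(1,2) by blast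
  then show ?thesis using s(1) by simp
qed

theorem theorem7p7:
  fixes C :: "('o, 'm) addcat" and E :: "('m \<times> 'm) set"
  assumes "exact_category C E" and "finite_exact C E"
  shows "(\<forall>X Y. indecomposable C X \<and> indecomposable C Y \<and> esub C E X Y
            \<longrightarrow> gr_le (mu C E X) (mu C E Y))
       \<and> (\<forall>X Y. indecomposable C X \<and> indecomposable C Y \<and> mu C E X = mu C E Y
            \<longrightarrow> elength C E X = elength C E Y)
       \<and> (\<forall>X Y. indecomposable C X \<and> indecomposable C Y \<and> elength C E X \<ge> elength C E Y \<and>
            (\<forall>X'. indecomposable C X' \<and> epsub C E X' X
                 \<longrightarrow> gr_le (mu C E X') (mu C E Y) \<and> mu C E X' \<noteq> mu C E Y)
            \<longrightarrow> gr_le (mu C E X) (mu C E Y))"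
  using mu_mono[OF assms] elength_eq_if_mu_eq[OF assms] mu_le_if_proper_subobjects_below[OF assms]
  by blast

end
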